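(* Assume that for every $k\ge1$ the function $\hat{\mathcal L}(\cdot,y_k)$ is convex, that $\tau_1\tau_2\|K\|^2\le1/4$ and $\tau_1\le1/(4L)$, and let $(x_*,y_* )$ be a saddle point of $\Phi$. Set \[\Delta_0:=\frac{\|x_*-x_0\|^2}{2\tau_1}+\frac{\|y_*-y_0\|^2}{2\tau_2}.\] Then for every $N\ge1$ there exists $k_0\le N$ such that \[r^y_{k_0}\in\partial\big[-\hat{\mathcal L}(x_{k_0},\cdot)+h_2\big](y_{k_0}),\qquad r^x_{k_0}\in\partial_{\varepsilon_{k_0}}\big[\hat{\mathcal L}(\cdot,y_{k_0})+h_1\big](x_{k_0}),\] and \[\|r^y_{k_0}\|\le\frac{\sqrt{3\Delta_0}}{\sqrt{\tau_2N}},\qquad\|r^x_{k_0}\|\le\frac{2\sqrt{\Delta_0}}{\sqrt{\tau_1N}},\qquad\varepsilon_{k_0}\le\frac{\Delta_0}{2N},\] where $r^y_k:=(y^{k-1}-y^k)/\tau_2$, $r^x_k:=(x_{k-1}-x_k)/\tau_1$ and $\varepsilon_k:=\hat{\mathcal L}(x_k,y_k)-\ell_{\hat{\mathcal L}(\cdot,y_k)}(x_k;x_{k-1})$.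
   Context: Let $n,m_1,m_2$ be positive integers, $Q\in\mathbb R^{n\times n}$ symmetric, $c\in\mathbb R^n$, $A\in\mathbb R^{m_1\times n}$, $b\in\mathbb R^{m_1}$, $B\in\mathbb R^{m_2\times n}$, $d\in\mathbb R^{m_2}$. Let $K:=-\begin{pmatrix}A\\ B\end{pmatrix}$ and $r:=(b;d)$. Fix $\rho\ge0$ and let $\mathbf 1$ be the all-ones vector. Define $\hat{\mathcal L}(x,y):=\langle x,Qx\rangle+\langle c,x\rangle+\langle y,Kx+r\rangle+\rho\langle x,\mathbf 1-x\rangle$, with $\nabla_x\hat{\mathcal L}(x,y)=c+\rho\mathbf 1+K^\top y+2Qx-2\rho x$, $\nabla_y\hat{\mathcal L}(x,y)=Kx+r$. Let $Y:=\mathbb R_+^{m_1}\times\mathbb R^{m_2}$, $h_1$ the indicator of $[0,1]^n$, $h_2$ the indicator of $Y$ ($0$ on the set, $+\infty$ outside), $\Phi(x,y):=\hat{\mathcal L}(x,y)+h_1(x)-h_2(y)$. A saddle point $(x_*,y_* )$ satisfies $\Phi(x_*,y)\le\Phi(x_*,y_* )\le\Phi(x,y_* )$ for all $x,y$. $L:=2(\|Q\|+\rho)$ with spectral norm. For differentiable $f$, $\ell_f(x;x'):=f(x')+\langle\nabla f(x'),x-x'\rangle$. For convex $g$, $\partial g$ is the subdifferential and $\partial_\varepsilon g(x):=\{v:g(z)\ge g(x)+\langle v,z-x\rangle-\varepsilon\ \forall z\}$. PDHG iterates with $\tau_1,\tau_2>0$: $x_0\in[0,1]^n$, $y_0\in\mathbb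 R^{m_1+m_2}$, $x_{-1}:=x_0$, $\bar x_0:=x_0$, and for $k\ge1$: $y_k=\Pi_Y(y_{k-1}+\tau_2(K\bar x_{k-1}+r))$, $x_k=\Pi_{[0,1]^n}(x_{k-1}-\tau_1\nabla_x\hat{\mathcal L}(x_{k-1},y_k))$, $\bar x_k=2x_k-x_{k-1}$ ($\Pi$ = Euclidean projection). Also $y^0:=y_0$ and $y^k:=y_k+\tau_2K(\bar x_k-x_k)$ for $k\ge1$. *)

theory Defs
  imports "HOL-Analysis.Analysis"
begin

definition Kop :: "real^'n^'m1 \<Rightarrow> real^'n^'m2 \<Rightarrow> real^'n \<Rightarrow> ((real^'m1) \<times> (real^'m2))" where
  "Kop A B x = (- (A *v x), - (B *v x))"

definition KT :: "real^'n^'m1 \<Rightarrow> real^'n^'m2 \<Rightarrow> ((real^'m1) \<times> (real^'m2)) \<Rightarrow> real^'n" where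
  "KT A B y = - (transpose A *v fst y + transpose B *v snd y)"

definition Lhat :: "real^'n^'n \<Rightarrow> real^'n \<Rightarrow> real^'n^'m1 \<Rightarrow> real^'n^'m2 \<Rightarrow> real^'m1 \<Rightarrow> real^'m2
    \<Rightarrow> real \<Rightarrow> real^'n \<Rightarrow> ((real^'m1) \<times> (real^'m2)) \<Rightarrow> real" where
  "Lhat Q c A B b d \<rho> x y =
     x \<bullet> (Q *v x) + c \<bullet> x + y \<bullet> (Kop A B x + (b, d)) + \<rho> * (x \<bullet> (vec 1 - x))"

definition gradx :: "real^'n^'n \<Rightarrow> real^'n \<Rightarrow> real^'n^'m1 \<Rightarrow> real^'n^'m2
    \<Rightarrow> real \<Rightarrow> real^'n \<Rightarrow> ((real^'m1) \<times> (real^'m2)) \<Rightarrow> real^'n" where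
  "gradx Q c A B \<rho> x y = c + \<rho> *\<^sub>R vec 1 + KT A B y + 2 *\<^sub>R (Q *v x) - (2 * \<rho>) *\<^sub>R x"

definition unitbox :: "(real^'n) set" where
  "unitbox = {x. \<forall>i. 0 \<le> x $ i \<and> x $ i \<le> 1}"

definition Yset :: "((real^'m1) \<times> (real^'m2)) set" where
  "Yset = {y. \<forall>i. 0 \<le> fst y $ i}"

definition ind :: "'a set \<Rightarrow> 'a \<Rightarrow> ereal" where
  "ind S x = (if x \<in> S then 0 else \<infinity>)"

definition eps_subdiff :: "('a::real_inner \<Rightarrow> ereal) \<Rightarrow> real \<Rightarrow> 'a \<Rightarrow> 'a set" where
  "eps_subdiff f \<epsilon> x = {v. \<forall>z. f z \<ge> f x + ereal (inner v (z - x) - \<epsilon>)}"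

definition subdiff :: "('a::real_inner \<Rightarrow> ereal) \<Rightarrow> 'a \<Rightarrow> 'a set" where
  "subdiff f x = {v. \<forall>z. f z \<ge> f x + ereal (inner v (z - x))}"

text \<open>PDHG state after k steps: (x_{k-1}, x_k, y_k), with x_{-1} = x_0.
  Note xbar_k = 2 x_k - x_{k-1}.\<close>
primrec pdhg :: "real^'n^'n \<Rightarrow> real^'n \<Rightarrow> real^'n^'m1 \<Rightarrow> real^'n^'m2 \<Rightarrow> real^'m1 \<Rightarrow> real^'m2
    \<Rightarrow> real \<Rightarrow> real \<Rightarrow> real \<Rightarrow> real^'n \<Rightarrow> ((real^'m1) \<times> (real^'m2)) \<Rightarrow> nat
    \<Rightarrow> (real^'n) \<times> (real^'n) \<times> ((real^'m1) \<times> (real^'m2))" where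
  "pdhg Q c A B b d \<rho> \<tau>1 \<tau>2 x0 y0 0 = (x0, x0, y0)"
| "pdhg Q c A B b d \<rho> \<tau>1 \<tau>2 x0 y0 (Suc k) =
     (case pdhg Q c A B b d \<rho> \<tau>1 \<tau>2 x0 y0 k of (xp, x, y) \<Rightarrow>
       (let xb = 2 *\<^sub>R x - xp;
            y' = closest_point Yset (y + \<tau>2 *\<^sub>R (Kop A B xb + (b, d)));
            x' = closest_point unitbox (x - \<tau>1 *\<^sub>R gradx Q c A B \<rho> x y')
        in (x, x', y')))"

end

theory Submission
  imports Defs
begin

text \<open>The two projections of a PDHG step have optimality conditions saying exactly that
  \<open>r\<^sup>y\<^sub>k\<close> is a subgradient of \<open>-Lhat(x\<^sub>k, \<cdot>) + h\<^sub>2\<close> at \<open>y\<^sub>k\<close> and that \<open>r\<^sup>x\<^sub>k\<close> is an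
  \<open>\<epsilon>\<^sub>k\<close>-subgradient of \<open>Lhat(\<cdot>, y\<^sub>k) + h\<^sub>1\<close> at \<open>x\<^sub>k\<close>, where the linearization gap \<open>\<epsilon>\<^sub>k\<close> is
  at most \<open>\<tau>\<^sub>1 \<parallel>r\<^sup>x\<^sub>k\<parallel>\<^sup>2 / 8\<close> by \<open>L\<close>-smoothness and \<open>\<tau>\<^sub>1 L \<le> 1/4\<close>. Testing both inclusions at the
  saddle point and applying the three-point identity shows that
  \<open>V\<^sub>k = \<parallel>x\<^sub>k - x\<^sub>*\<parallel>\<^sup>2/(2\<tau>\<^sub>1) + \<parallel>y\<^sup>k - y\<^sub>*\<parallel>\<^sup>2/(2\<tau>\<^sub>2)\<close> drops in step \<open>k\<close> by at least
  \<open>\<delta>\<^sub>k = \<tau>\<^sub>1\<parallel>r\<^sup>x\<^sub>k\<parallel>\<^sup>2/2 + \<tau>\<^sub>2\<parallel>r\<^sup>y\<^sub>k\<parallel>\<^sup>2/2 - \<tau>\<^sub>1\<tau>\<^sub>2\<langle>r\<^sup>y\<^sub>k, K r\<^sup>x\<^sub>k\<rangle> - \<epsilon>\<^sub>k\<close>. Young's inequality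
  together with \<open>\<tau>\<^sub>1\<tau>\<^sub>2\<parallel>K\<parallel>\<^sup>2 \<le> 1/4\<close> makes \<open>\<delta>\<^sub>k\<close> dominate \<open>\<tau>\<^sub>2\<parallel>r\<^sup>y\<^sub>k\<parallel>\<^sup>2/3\<close>, \<open>\<tau>\<^sub>1\<parallel>r\<^sup>x\<^sub>k\<parallel>\<^sup>2/4\<close> and
  \<open>2\<epsilon>\<^sub>k\<close>, and since the \<open>\<delta>\<^sub>k\<close> sum to at most \<open>V\<^sub>0 = \<Delta>\<^sub>0\<close>, some \<open>k \<le> N\<close> has
  \<open>\<delta>\<^sub>k \<le> \<Delta>\<^sub>0/N\<close>. Only convexity and \<open>L\<close>-smoothness of \<open>Lhat\<close> in \<open>x\<close> and its affinity in \<open>y\<close>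
  matter.\<close>

lemma subdiff_indicatorI:
  assumes "a \<in> S" and "\<And>z. z \<in> S \<Longrightarrow> f a + inner g (z - a) \<le> f z"
  shows "g \<in> subdiff (\<lambda>z. ereal (f z) + ind S z) a"
  using assms by (auto simp: subdiff_def ind_def)

lemma eps_subdiff_indicatorI:
  assumes "a \<in> S" and "\<And>z. z \<in> S \<Longrightarrow> f a + inner g (z - a) - e \<le> f z"
  shows "g \<in> eps_subdiff (\<lambda>z. ereal (f z) + ind S z) e a"
  using assms by (auto simp: eps_subdiff_def ind_def add_diff_eq)

lemma inner_diff_eq_norms:
  fixes u v w :: "'a::real_inner"
  shows "2 * inner (u - v) (v - w) = (norm (u - w))\<^sup>2 - (norm (v - w))\<^sup>2 - (norm (u - v))\<^sup>2"
  by (simp add: power2_norm_eq_inner inner_diff_left inner_diff_right inner_commute algebra_simps)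

lemma ex_le_average:
  fixes f :: "nat \<Rightarrow> real"
  assumes "N \<ge> 1" and "(\<Sum>j<N. f j) \<le> D"
  shows "\<exists>j<N. f j \<le> D / N"
proof (rule ccontr)
  assume "\<not> ?thesis"
  then have "(\<Sum>j<N. D / N) < (\<Sum>j<N. f j)"
    using assms(1) by (intro sum_strict_mono) (auto simp: not_le lessThan_empty_iff)
  then show False
    using assms by simp
qed

lemma le_sqrt_divide_sqrt:
  fixes s t b :: real
  assumes "s > 0" and "s * t\<^sup>2 \<le> b"
  shows "t \<le> sqrt b / sqrt s"
proof -
  have "t\<^sup>2 \<le> b / s"
    using assms by (simp add: field_simps mult.commute)
  then show ?thesis
    by (metis real_le_rsqrt real_sqrt_divide)
qed

lemma coupling_le_squares:
  fixes \<tau>1 \<tau>2 \<kappa> p v a :: real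
  assumes "\<tau>1 > 0" "\<tau>2 > 0" "a > 0" and "\<tau>1 * \<tau>2 * \<kappa>\<^sup>2 \<le> 1 / 4"
  shows "\<tau>1 * \<tau>2 * (\<kappa> * p * v) \<le> \<tau>2 * p\<^sup>2 / (2 * a) + a * \<tau>1 * v\<^sup>2 / 8"
proof -
  have "\<tau>2 / (2 * a) * (p - a * \<tau>1 * \<kappa> * v)\<^sup>2
      = \<tau>2 * p\<^sup>2 / (2 * a) - \<tau>1 * \<tau>2 * (\<kappa> * p * v) + a * \<tau>1 * v\<^sup>2 / 2 * (\<tau>1 * \<tau>2 * \<kappa>\<^sup>2)"
    using assms by (simp add: power2_eq_square field_simps)
  moreover have "0 \<le> \<tau>2 / (2 * a) * (p - a * \<tau>1 * \<kappa> * v)\<^sup>2"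
    using assms by simp
  moreover have "a * \<tau>1 * v\<^sup>2 / 2 * (\<tau>1 * \<tau>2 * \<kappa>\<^sup>2) \<le> a * \<tau>1 * v\<^sup>2 / 2 * (1 / 4)"
    using assms by (intro mult_left_mono) auto
  ultimately show ?thesis
    by linarith
qed

locale linearized_pdhg =
  fixes X :: "'a::euclidean_space set" and Y :: "'b::euclidean_space set"
    and \<L> :: "'a \<Rightarrow> 'b \<Rightarrow> real" and G :: "'a \<Rightarrow> 'b \<Rightarrow> 'a"
    and K :: "'a \<Rightarrow> 'b" and r :: 'b
    and L \<tau>1 \<tau>2 :: real
    and x :: "nat \<Rightarrow> 'a" and y :: "nat \<Rightarrow> 'b"
  assumes closed_X: "closed X" and convex_X: "convex X"
    and closed_Y: "closed Y" and convex_Y: "convex Y" and Y_nonempty: "Y \<noteq> {}"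
    and above_tangent: "\<L> u v + inner (G u v) (z - u) \<le> \<L> z v"
    and below_quadratic: "\<L> z v \<le> \<L> u v + inner (G u v) (z - u) + L / 2 * (norm (z - u))\<^sup>2"
    and affine_dual: "\<L> u v - \<L> u w = inner (v - w) (K u + r)"
    and bounded_linear_K: "bounded_linear K"
    and tau1_pos: "\<tau>1 > 0" and tau2_pos: "\<tau>2 > 0"
    and step_coupling: "\<tau>1 * \<tau>2 * (onorm K)\<^sup>2 \<le> 1 / 4"
    and step_smooth: "\<tau>1 * L \<le> 1 / 4"
    and x_0_in_X: "x 0 \<in> X"
    and y_Suc: "y (Suc k) = closest_point Y (y k + \<tau>2 *\<^sub>R (K (2 *\<^sub>R x k - x (k - 1)) + r))"
    and x_Suc: "x (Suc k) = closest_point X (x k - \<tau>1 *\<^sub>R G (x k) (y (Suc k)))"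
begin

text \<open>\<open>yup k\<close> is the paper's \<open>y\<^sup>k = y\<^sub>k + \<tau>\<^sub>2 K(x\<^sub>k - x\<^sub>k\<^sub>-\<^sub>1)\<close>. At \<open>k = 0\<close> the truncated
  subtraction gives \<open>x (k - 1) = x 0\<close>, which is the convention \<open>x\<^sub>-\<^sub>1 = x\<^sub>0\<close> (so \<open>yup 0 = y 0\<close>).\<close>

definition yup :: "nat \<Rightarrow> 'b" where
  "yup k = y k + \<tau>2 *\<^sub>R K (x k - x (k - 1))"

definition rx :: "nat \<Rightarrow> 'a" where
  "rx k = (1 / \<tau>1) *\<^sub>R (x (k - 1) - x k)"

definition ry :: "nat \<Rightarrow> 'b" where
  "ry k = (1 / \<tau>2) *\<^sub>R (yup (k - 1) - yup k)"

definition eps :: "nat \<Rightarrow> real" where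
  "eps k = \<L> (x k) (y k) - (\<L> (x (k - 1)) (y k) + inner (G (x (k - 1)) (y k)) (x k - x (k - 1)))"

lemma linear_K: "linear K"
  using bounded_linear_K bounded_linear.linear by blast

lemma x_in_X: "x k \<in> X"
  using x_0_in_X closest_point_in_set[OF closed_X] by (cases k) (auto simp: x_Suc)

lemma y_Suc_in_Y: "y (Suc k) \<in> Y"
  using closest_point_in_set[OF closed_Y Y_nonempty] by (simp add: y_Suc)

lemma yup_0: "yup 0 = y 0"
  using linear_0[OF linear_K] by (simp add: yup_def)

lemma x_step: "x j - x (Suc j) = \<tau>1 *\<^sub>R rx (Suc j)"
  using tau1_pos by (simp add: rx_def)

lemma yup_step: "yup j - yup (Suc j) = \<tau>2 *\<^sub>R ry (Suc j)"
  using tau2_pos by (simp add: ry_def)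

lemma y_Suc_eq_yup: "y (Suc j) = yup (Suc j) + (\<tau>1 * \<tau>2) *\<^sub>R K (rx (Suc j))"
proof -
  have "x (Suc j) - x j = - \<tau>1 *\<^sub>R rx (Suc j)"
    using x_step[of j] by (simp add: algebra_simps)
  then show ?thesis
    by (simp add: yup_def linear_scale[OF linear_K] linear_neg[OF linear_K])
qed

lemma ry_optimality:
  assumes "v \<in> Y"
  shows "inner (ry (Suc j) + K (x (Suc j)) + r) (v - y (Suc j)) \<le> 0"
proof -
  define a where "a = y j + \<tau>2 *\<^sub>R (K (2 *\<^sub>R x j - x (j - 1)) + r)"
  have "a - y (Suc j) = \<tau>2 *\<^sub>R (ry (Suc j) + K (x (Suc j)) + r)"
    using tau2_pos
    by (simp add: a_def ry_def yup_def linear_add[OF linear_K] linear_diff[OF linear_K]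
        linear_scale[OF linear_K] scaleR_2 algebra_simps)
  moreover have "inner (a - y (Suc j)) (v - y (Suc j)) \<le> 0"
    unfolding a_def y_Suc by (rule closest_point_dot[OF convex_Y closed_Y assms])
  ultimately show ?thesis
    using tau2_pos by (simp add: mult_le_0_iff)
qed

lemma rx_optimality:
  assumes "u \<in> X"
  shows "inner (rx (Suc j) - G (x j) (y (Suc j))) (u - x (Suc j)) \<le> 0"
proof -
  define a where "a = x j - \<tau>1 *\<^sub>R G (x j) (y (Suc j))"
  have "a - x (Suc j) = \<tau>1 *\<^sub>R (rx (Suc j) - G (x j) (y (Suc j)))"
    using tau1_pos by (simp add: a_def rx_def algebra_simps)
  moreover have "inner (a - x (Suc j)) (u - x (Suc j)) \<le> 0"
    unfolding a_def x_Suc by (rule closest_point_dot[OF convex_X closed_X assms])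
  ultimately show ?thesis
    using tau1_pos by (simp add: mult_le_0_iff)
qed

lemma ry_subgradient_ineq:
  assumes "v \<in> Y"
  shows "- \<L> (x (Suc j)) (y (Suc j)) + inner (ry (Suc j)) (v - y (Suc j)) \<le> - \<L> (x (Suc j)) v"
proof -
  have "inner (ry (Suc j) + K (x (Suc j)) + r) (v - y (Suc j))
      = inner (ry (Suc j)) (v - y (Suc j)) + inner (v - y (Suc j)) (K (x (Suc j)) + r)"
    by (simp add: inner_add_left inner_add_right inner_commute)
  then show ?thesis
    using ry_optimality[OF assms, of j] affine_dual[of "x (Suc j)" v "y (Suc j)"] by linarith
qed

lemma rx_eps_subgradient_ineq:
  assumes "u \<in> X"
  shows "\<L> (x (Suc j)) (y (Suc j)) + inner (rx (Suc j)) (u - x (Suc j)) - eps (Suc j)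
    \<le> \<L> u (y (Suc j))"
  using rx_optimality[OF assms, of j] above_tangent[of "x j" "y (Suc j)" u]
  by (simp add: eps_def inner_diff_left inner_diff_right)

lemma ry_subgradient:
  "ry (Suc j) \<in> subdiff (\<lambda>v. ereal (- \<L> (x (Suc j)) v) + ind Y v) (y (Suc j))"
  using y_Suc_in_Y ry_subgradient_ineq by (rule subdiff_indicatorI)

lemma rx_eps_subgradient:
  "rx (Suc j) \<in> eps_subdiff (\<lambda>u. ereal (\<L> u (y (Suc j))) + ind X u) (eps (Suc j)) (x (Suc j))"
  using x_in_X rx_eps_subgradient_ineq by (rule eps_subdiff_indicatorI)

lemma eps_le: "eps (Suc j) \<le> \<tau>1 * (norm (rx (Suc j)))\<^sup>2 / 8"
proof -
  have "eps (Suc j) \<le> L / 2 * (norm (x (Suc j) - x j))\<^sup>2"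
    using below_quadratic[of "x (Suc j)" "y (Suc j)" "x j"] by (simp add: eps_def)
  also have "\<dots> = (\<tau>1 * L) * (\<tau>1 * (norm (rx (Suc j)))\<^sup>2 / 2)"
    using tau1_pos x_step[of j] by (simp add: norm_minus_commute power2_eq_square)
  also have "\<dots> \<le> 1 / 4 * (\<tau>1 * (norm (rx (Suc j)))\<^sup>2 / 2)"
    using step_smooth tau1_pos by (intro mult_right_mono) auto
  finally show ?thesis
    by simp
qed

definition decrease :: "nat \<Rightarrow> real" where
  "decrease k = \<tau>1 * (norm (rx k))\<^sup>2 / 2 + \<tau>2 * (norm (ry k))\<^sup>2 / 2
     - \<tau>1 * \<tau>2 * inner (ry k) (K (rx k)) - eps k"

lemma decrease_lower_bounds:
  shows "\<tau>2 * (norm (ry (Suc j)))\<^sup>2 \<le> 3 * decrease (Suc j)"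
    and "\<tau>1 * (norm (rx (Suc j)))\<^sup>2 \<le> 4 * decrease (Suc j)"
    and "2 * eps (Suc j) \<le> decrease (Suc j)"
proof -
  define p v where "p = norm (ry (Suc j))" and "v = norm (rx (Suc j))"
  have "inner (ry (Suc j)) (K (rx (Suc j))) \<le> p * norm (K (rx (Suc j)))"
    unfolding p_def by (rule norm_cauchy_schwarz)
  also have "\<dots> \<le> p * (onorm K * v)"
    unfolding p_def v_def by (intro mult_left_mono onorm[OF bounded_linear_K]) simp
  finally have coupling:
    "\<tau>1 * \<tau>2 * inner (ry (Suc j)) (K (rx (Suc j))) \<le> \<tau>1 * \<tau>2 * (onorm K * p * v)"
    using tau1_pos tau2_pos by (simp add: mult_ac)
  have am_gm_1: "\<tau>1 * \<tau>2 * (onorm K * p * v) \<le> \<tau>2 * p\<^sup>2 / 2 + \<tau>1 * v\<^sup>2 / 8"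
    using coupling_le_squares[OF tau1_pos tau2_pos _ step_coupling, of 1 p v] by simp
  have am_gm_3: "\<tau>1 * \<tau>2 * (onorm K * p * v) \<le> \<tau>2 * p\<^sup>2 / 6 + 3 * (\<tau>1 * v\<^sup>2) / 8"
    using coupling_le_squares[OF tau1_pos tau2_pos _ step_coupling, of 3 p v]
    by (simp add: mult.assoc)
  have eps: "eps (Suc j) \<le> \<tau>1 * v\<^sup>2 / 8"
    unfolding v_def by (rule eps_le)
  show "\<tau>2 * (norm (ry (Suc j)))\<^sup>2 \<le> 3 * decrease (Suc j)"
    using coupling am_gm_3 eps unfolding decrease_def p_def[symmetric] v_def[symmetric]
    by (simp add: algebra_simps)
  show "\<tau>1 * (norm (rx (Suc j)))\<^sup>2 \<le> 4 * decrease (Suc j)"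
    using coupling am_gm_1 eps unfolding decrease_def p_def[symmetric] v_def[symmetric]
    by (simp add: algebra_simps)
  show "2 * eps (Suc j) \<le> decrease (Suc j)"
    using coupling am_gm_1 eps unfolding decrease_def p_def[symmetric] v_def[symmetric]
    by (simp add: algebra_simps)
qed

end

locale linearized_pdhg_saddle = linearized_pdhg +
  fixes xs :: 'a and ys :: 'b
  assumes xs_in_X: "xs \<in> X" and ys_in_Y: "ys \<in> Y"
    and saddle: "\<And>u v. u \<in> X \<Longrightarrow> v \<in> Y \<Longrightarrow> \<L> xs v \<le> \<L> xs ys \<and> \<L> xs ys \<le> \<L> u ys"
begin

definition lyapunov :: "nat \<Rightarrow> real" where
  "lyapunov k = (norm (x k - xs))\<^sup>2 / (2 * \<tau>1) + (norm (yup k - ys))\<^sup>2 / (2 * \<tau>2)"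

lemma lyapunov_nonneg: "0 \<le> lyapunov k"
  using tau1_pos tau2_pos by (simp add: lyapunov_def)

lemma residual_gap_nonneg:
  "0 \<le> eps (Suc j) + inner (rx (Suc j)) (x (Suc j) - xs) + inner (ry (Suc j)) (y (Suc j) - ys)"
  using rx_eps_subgradient_ineq[OF xs_in_X, of j] ry_subgradient_ineq[OF ys_in_Y, of j]
    saddle[OF x_in_X[of "Suc j"] y_Suc_in_Y[of j]]
  by (simp add: inner_diff_right)

lemma lyapunov_decrease: "decrease (Suc j) \<le> lyapunov j - lyapunov (Suc j)"
proof -
  have "inner (rx (Suc j)) (x (Suc j) - xs)
      = ((norm (x j - xs))\<^sup>2 - (norm (x (Suc j) - xs))\<^sup>2) / (2 * \<tau>1) - \<tau>1 * (norm (rx (Suc j)))\<^sup>2 / 2"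
    using inner_diff_eq_norms[of "x j" "x (Suc j)" xs] tau1_pos
    unfolding x_step by (simp add: field_simps power2_eq_square)
  moreover have "inner (ry (Suc j)) (yup (Suc j) - ys)
      = ((norm (yup j - ys))\<^sup>2 - (norm (yup (Suc j) - ys))\<^sup>2) / (2 * \<tau>2) - \<tau>2 * (norm (ry (Suc j)))\<^sup>2 / 2"
    using inner_diff_eq_norms[of "yup j" "yup (Suc j)" ys] tau2_pos
    unfolding yup_step by (simp add: field_simps power2_eq_square)
  moreover have "inner (ry (Suc j)) (y (Suc j) - ys)
      = inner (ry (Suc j)) (yup (Suc j) - ys) + \<tau>1 * \<tau>2 * inner (ry (Suc j)) (K (rx (Suc j)))"
    by (subst y_Suc_eq_yup) (simp add: inner_diff_right inner_add_right)
  ultimately show ?thesis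
    using residual_gap_nonneg[of j]
    unfolding decrease_def lyapunov_def by (simp add: diff_divide_distrib)
qed

lemma sum_decrease_le: "(\<Sum>j<N. decrease (Suc j)) \<le> lyapunov 0"
proof -
  have "(\<Sum>j<N. decrease (Suc j)) \<le> lyapunov 0 - lyapunov N"
  proof (induction N)
    case (Suc N)
    then show ?case
      using lyapunov_decrease[of N] by simp
  qed simp
  then show ?thesis
    using lyapunov_nonneg[of N] by linarith
qed

theorem residual_rate:
  assumes "N \<ge> 1"
  defines "\<Delta>0 \<equiv> (norm (xs - x 0))\<^sup>2 / (2 * \<tau>1) + (norm (ys - y 0))\<^sup>2 / (2 * \<tau>2)"
  shows "\<exists>k. 1 \<le> k \<and> k \<le> N
    \<and> ry k \<in> subdiff (\<lambda>v. ereal (- \<L> (x k) v) + ind Y v) (y k)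
    \<and> rx k \<in> eps_subdiff (\<lambda>u. ereal (\<L> u (y k)) + ind X u) (eps k) (x k)
    \<and> norm (ry k) \<le> sqrt (3 * \<Delta>0) / sqrt (\<tau>2 * N)
    \<and> norm (rx k) \<le> 2 * sqrt \<Delta>0 / sqrt (\<tau>1 * N)
    \<and> eps k \<le> \<Delta>0 / (2 * N)"
proof -
  have "lyapunov 0 = \<Delta>0"
    by (simp add: lyapunov_def \<Delta>0_def yup_0 norm_minus_commute)
  then obtain j where "j < N" and j: "N * decrease (Suc j) \<le> \<Delta>0"
    using ex_le_average[OF assms(1) sum_decrease_le] assms(1) by (auto simp: field_simps)
  have N_pos: "real N > 0"
    using assms(1) by simp
  have "N * (\<tau>2 * (norm (ry (Suc j)))\<^sup>2) \<le> N * (3 * decrease (Suc j))"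
    using decrease_lower_bounds(1) by (rule mult_left_mono) simp
  then have "\<tau>2 * N * (norm (ry (Suc j)))\<^sup>2 \<le> 3 * \<Delta>0"
    using j by (simp add: algebra_simps)
  then have ry_bound: "norm (ry (Suc j)) \<le> sqrt (3 * \<Delta>0) / sqrt (\<tau>2 * N)"
    using tau2_pos N_pos by (intro le_sqrt_divide_sqrt) auto
  have "N * (\<tau>1 * (norm (rx (Suc j)))\<^sup>2) \<le> N * (4 * decrease (Suc j))"
    using decrease_lower_bounds(2) by (rule mult_left_mono) simp
  then have "\<tau>1 * N * (norm (rx (Suc j)))\<^sup>2 \<le> 4 * \<Delta>0"
    using j by (simp add: algebra_simps)
  then have "norm (rx (Suc j)) \<le> sqrt (4 * \<Delta>0) / sqrt (\<tau>1 * N)"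
    using tau1_pos N_pos by (intro le_sqrt_divide_sqrt) auto
  then have rx_bound: "norm (rx (Suc j)) \<le> 2 * sqrt \<Delta>0 / sqrt (\<tau>1 * N)"
    by (simp add: real_sqrt_mult)
  have "N * (2 * eps (Suc j)) \<le> N * decrease (Suc j)"
    using decrease_lower_bounds(3) by (rule mult_left_mono) simp
  then have "eps (Suc j) * (2 * N) \<le> \<Delta>0"
    using j by (simp add: mult_ac)
  then have eps_bound: "eps (Suc j) \<le> \<Delta>0 / (2 * N)"
    using N_pos by (simp add: field_simps)
  show ?thesis
    using \<open>j < N\<close> ry_subgradient rx_eps_subgradient ry_bound rx_bound eps_bound
    by (intro exI[of _ "Suc j"]) auto
qed

end

lemma bounded_linear_Kop: "bounded_linear (Kop A B)"
  unfolding Kop_def by (intro bounded_linear_Pair bounded_linear_minus matrix_vector_mul_bounded_linear)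

lemma inner_Kop: "inner y (Kop A B x) = inner (KT A B y) x"
  by (cases y) (simp add: Kop_def KT_def inner_add_left inner_diff_left inner_minus_left dot_lmul_matrix)

lemma Lhat_expand:
  fixes Q :: "real^'n^'n"
  assumes "transpose Q = Q"
  shows "Lhat Q c A B b d \<rho> (u + h) v
    = Lhat Q c A B b d \<rho> u v + inner (gradx Q c A B \<rho> u v) h + (inner h (Q *v h) - \<rho> * inner h h)"
proof -
  have "inner u (Q *v h) = inner (Q *v u) h"
    by (metis assms transpose_matrix_vector dot_lmul_matrix)
  then show ?thesis
    unfolding Lhat_def gradx_def
    by (simp add: linear_add[OF bounded_linear.linear[OF bounded_linear_Kop]] inner_Kop
        matrix_vector_right_distrib inner_add_left inner_add_right inner_diff_left inner_diff_right
        inner_commute algebra_simps)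
qed

text \<open>The quadratic part of \<open>Lhat\<close> does not depend on the dual variable, so convexity of
  \<open>Lhat(\<cdot>, v)\<close> for a single \<open>v\<close> yields the gradient inequality for every \<open>v\<close>.\<close>

lemma quadratic_part_nonneg_if_convex:
  fixes Q :: "real^'n^'n"
  assumes "transpose Q = Q" and "convex_on UNIV (\<lambda>u. Lhat Q c A B b d \<rho> u v)"
  shows "0 \<le> inner h (Q *v h) - \<rho> * inner h h"
proof -
  define q where "q = inner h (Q *v h) - \<rho> * inner h h"
  let ?f = "\<lambda>u. Lhat Q c A B b d \<rho> u v"
  have "?f ((1/2) *\<^sub>R h) \<le> ?f 0 / 2 + ?f h / 2"
    using convex_onD[OF assms(2), of "1/2" 0 h] by simp
  moreover have "?f h = ?f 0 + inner (gradx Q c A B \<rho> 0 v) h + q"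
    using Lhat_expand[OF assms(1), of c A B b d \<rho> 0 h v] by (simp add: q_def)
  moreover have "?f ((1/2) *\<^sub>R h) = ?f 0 + inner (gradx Q c A B \<rho> 0 v) h / 2 + q / 4"
    using Lhat_expand[OF assms(1), of c A B b d \<rho> 0 "(1/2) *\<^sub>R h" v]
    by (simp add: q_def matrix_vector_mult_scaleR algebra_simps diff_divide_distrib)
  ultimately show ?thesis
    unfolding q_def[symmetric] by linarith
qed

lemma Lhat_above_tangent:
  fixes Q :: "real^'n^'n"
  assumes "transpose Q = Q" and "convex_on UNIV (\<lambda>u. Lhat Q c A B b d \<rho> u v')"
  shows "Lhat Q c A B b d \<rho> u v + inner (gradx Q c A B \<rho> u v) (z - u) \<le> Lhat Q c A B b d \<rho> z v"
  using Lhat_expand[OF assms(1), of c A B b d \<rho> u "z - u" v]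
    quadratic_part_nonneg_if_convex[OF assms, of "z - u"]
  by simp

lemma Lhat_below_quadratic:
  fixes Q :: "real^'n^'n"
  assumes "transpose Q = Q" and "\<rho> \<ge> 0"
  shows "Lhat Q c A B b d \<rho> z v \<le> Lhat Q c A B b d \<rho> u v + inner (gradx Q c A B \<rho> u v) (z - u)
    + (onorm (\<lambda>x. Q *v x) + \<rho>) * (norm (z - u))\<^sup>2"
proof -
  define h where "h = z - u"
  have "inner h (Q *v h) \<le> norm h * norm (Q *v h)"
    by (rule norm_cauchy_schwarz)
  also have "\<dots> \<le> norm h * (onorm (\<lambda>x. Q *v x) * norm h)"
    by (intro mult_left_mono onorm matrix_vector_mul_bounded_linear) simp
  finally have "inner h (Q *v h) \<le> onorm (\<lambda>x. Q *v x) * (norm h)\<^sup>2"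
    by (simp add: power2_eq_square mult_ac)
  moreover have "0 \<le> \<rho> * (norm h)\<^sup>2"
    using assms(2) by simp
  ultimately have "inner h (Q *v h) - \<rho> * inner h h \<le> (onorm (\<lambda>x. Q *v x) + \<rho>) * (norm h)\<^sup>2"
    by (simp add: dot_square_norm distrib_right)
  moreover have "Lhat Q c A B b d \<rho> z v
      = Lhat Q c A B b d \<rho> u v + inner (gradx Q c A B \<rho> u v) h + (inner h (Q *v h) - \<rho> * inner h h)"
    using Lhat_expand[OF assms(1), of c A B b d \<rho> u h v] by (simp add: h_def)
  ultimately show ?thesis
    unfolding h_def[symmetric] by linarith
qed

lemma Lhat_affine_dual:
  "Lhat Q c A B b d \<rho> u v - Lhat Q c A B b d \<rho> u w = inner (v - w) (Kop A B u + (b, d))"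
  unfolding Lhat_def by (simp add: inner_diff_left)

lemma unitbox_eq_cbox: "unitbox = cbox 0 1"
  by (simp add: unitbox_def interval_cart)

lemma closed_Yset: "closed Yset"
  unfolding Yset_def
  by (intro closed_Collect_all closed_Collect_le continuous_intros)

lemma convex_Yset: "convex Yset"
  unfolding Yset_def convex_def by (auto intro!: add_nonneg_nonneg mult_nonneg_nonneg)

lemma zero_in_Yset: "0 \<in> Yset"
  by (simp add: Yset_def)

lemma pdhg_Suc_components:
  fixes Q :: "real^'n^'n" and c A B b d \<rho> \<tau>1 \<tau>2 x0 y0
  defines "P \<equiv> pdhg Q c A B b d \<rho> \<tau>1 \<tau>2 x0 y0"
  shows "fst (P (Suc k)) = fst (snd (P k))"
    and "snd (snd (P (Suc k))) = closest_point Yset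
           (snd (snd (P k)) + \<tau>2 *\<^sub>R (Kop A B (2 *\<^sub>R fst (snd (P k)) - fst (P k)) + (b, d)))"
    and "fst (snd (P (Suc k))) = closest_point unitbox
           (fst (snd (P k)) - \<tau>1 *\<^sub>R gradx Q c A B \<rho> (fst (snd (P k))) (snd (snd (P (Suc k)))))"
  by (simp_all add: P_def Let_def split: prod.split)

lemma pdhg_fst:
  "fst (pdhg Q c A B b d \<rho> \<tau>1 \<tau>2 x0 y0 k) = fst (snd (pdhg Q c A B b d \<rho> \<tau>1 \<tau>2 x0 y0 (k - 1)))"
  by (cases k) (simp, simp only: pdhg_Suc_components(1) diff_Suc_1)

lemma linearized_pdhg_Lhat:
  fixes Q :: "real^'n^'n"
  assumes "transpose Q = Q" and "\<rho> \<ge> 0" and "\<tau>1 > 0" and "\<tau>2 > 0" and "x0 \<in> unitbox"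
    and "convex_on UNIV (\<lambda>u. Lhat Q c A B b d \<rho> u v)"
    and "\<tau>1 * \<tau>2 * (onorm (Kop A B))\<^sup>2 \<le> 1 / 4"
    and "\<tau>1 \<le> 1 / (4 * (2 * (onorm (\<lambda>x. Q *v x) + \<rho>)))"
  shows "linearized_pdhg unitbox Yset (Lhat Q c A B b d \<rho>) (gradx Q c A B \<rho>) (Kop A B) (b, d)
    (2 * (onorm (\<lambda>x. Q *v x) + \<rho>)) \<tau>1 \<tau>2
    (\<lambda>k. fst (snd (pdhg Q c A B b d \<rho> \<tau>1 \<tau>2 x0 y0 k))) (\<lambda>k. snd (snd (pdhg Q c A B b d \<rho> \<tau>1 \<tau>2 x0 y0 k)))"
proof (rule linearized_pdhg.intro)
  let ?P = "pdhg Q c A B b d \<rho> \<tau>1 \<tau>2 x0 y0"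
  show "closed unitbox" "convex unitbox"
    by (simp_all add: unitbox_eq_cbox closed_cbox)
  show "closed Yset" "convex Yset" "Yset \<noteq> {}"
    using closed_Yset convex_Yset zero_in_Yset by auto
  fix u z p q
  show "Lhat Q c A B b d \<rho> u p + inner (gradx Q c A B \<rho> u p) (z - u) \<le> Lhat Q c A B b d \<rho> z p"
    by (rule Lhat_above_tangent[OF assms(1,6)])
  show "Lhat Q c A B b d \<rho> z p \<le> Lhat Q c A B b d \<rho> u p + inner (gradx Q c A B \<rho> u p) (z - u)
      + 2 * (onorm (\<lambda>x. Q *v x) + \<rho>) / 2 * (norm (z - u))\<^sup>2"
    using Lhat_below_quadratic[OF assms(1,2), of c A B b d z p u] by (simp add: field_simps)
  show "Lhat Q c A B b d \<rho> u p - Lhat Q c A B b d \<rho> u q = inner (p - q) (Kop A B u + (b, d))"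
    by (rule Lhat_affine_dual)
  show "bounded_linear (Kop A B)"
    by (rule bounded_linear_Kop)
  show "\<tau>1 > 0" "\<tau>2 > 0" "\<tau>1 * \<tau>2 * (onorm (Kop A B))\<^sup>2 \<le> 1 / 4"
    using assms by simp_all
  show "\<tau>1 * (2 * (onorm (\<lambda>x. Q *v x) + \<rho>)) \<le> 1 / 4"
  proof (cases "onorm (\<lambda>x. Q *v x) + \<rho> > 0")
    case True
    then show ?thesis
      using assms(8) by (simp add: field_simps)
  next
    case False
    then have "onorm (\<lambda>x. Q *v x) + \<rho> = 0"
      using onorm_pos_le[OF matrix_vector_mul_bounded_linear, of Q] assms(2) by simp
    then show ?thesis
      by simp
  qed
  show "fst (snd (?P 0)) \<in> unitbox"
    using assms(5) by simp
  fix k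
  show "snd (snd (?P (Suc k))) = closest_point Yset (snd (snd (?P k))
      + \<tau>2 *\<^sub>R (Kop A B (2 *\<^sub>R fst (snd (?P k)) - fst (snd (?P (k - 1)))) + (b, d)))"
    by (simp only: pdhg_Suc_components(2) pdhg_fst)
  show "fst (snd (?P (Suc k))) = closest_point unitbox
      (fst (snd (?P k)) - \<tau>1 *\<^sub>R gradx Q c A B \<rho> (fst (snd (?P k))) (snd (snd (?P (Suc k)))))"
    by (rule pdhg_Suc_components(3))
qed

theorem mainTheorem2:
  fixes Q :: "real^'n^'n" and c :: "real^'n"
    and A :: "real^'n^'m1" and b :: "real^'m1"
    and B :: "real^'n^'m2" and d :: "real^'m2"
    and \<rho> \<tau>1 \<tau>2 :: real
    and x0 xs :: "real^'n" and y0 ys :: "(real^'m1) \<times> (real^'m2)"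
    and xk :: "nat \<Rightarrow> real^'n" and yk :: "nat \<Rightarrow> (real^'m1) \<times> (real^'m2)"
    and yup :: "nat \<Rightarrow> (real^'m1) \<times> (real^'m2)"
  defines "xk \<equiv> (\<lambda>k. fst (snd (pdhg Q c A B b d \<rho> \<tau>1 \<tau>2 x0 y0 k)))"
    and "yk \<equiv> (\<lambda>k. snd (snd (pdhg Q c A B b d \<rho> \<tau>1 \<tau>2 x0 y0 k)))"
    and "yup \<equiv> (\<lambda>k. if k = 0 then y0
                     else yk k + \<tau>2 *\<^sub>R Kop A B ((2 *\<^sub>R xk k - xk (k - 1)) - xk k))"
  assumes symQ: "transpose Q = Q"
    and rho: "\<rho> \<ge> 0"
    and tau1: "\<tau>1 > 0" and tau2: "\<tau>2 > 0"
    and x0: "x0 \<in> unitbox"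
    and conv: "\<And>k. k \<ge> 1 \<Longrightarrow> convex_on UNIV (\<lambda>x. Lhat Q c A B b d \<rho> x (yk k))"
    and step1: "\<tau>1 * \<tau>2 * (onorm (Kop A B))\<^sup>2 \<le> 1 / 4"
    and step2: "\<tau>1 \<le> 1 / (4 * (2 * (onorm (\<lambda>x. Q *v x) + \<rho>)))"
    and saddle: "xs \<in> unitbox" "ys \<in> Yset"
      "\<And>x y. x \<in> unitbox \<Longrightarrow> y \<in> Yset \<Longrightarrow>
         Lhat Q c A B b d \<rho> xs y \<le> Lhat Q c A B b d \<rho> xs ys
         \<and> Lhat Q c A B b d \<rho> xs ys \<le> Lhat Q c A B b d \<rho> x ys"
  shows "\<forall>N::nat. N \<ge> 1 \<longrightarrow>
    (let \<Delta>0 = (norm (xs - x0))\<^sup>2 / (2 * \<tau>1) + (norm (ys - y0))\<^sup>2 / (2 * \<tau>2) in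
     \<exists>k0. 1 \<le> k0 \<and> k0 \<le> N \<and>
       (let ry = (1 / \<tau>2) *\<^sub>R (yup (k0 - 1) - yup k0);
            rx = (1 / \<tau>1) *\<^sub>R (xk (k0 - 1) - xk k0);
            \<epsilon> = Lhat Q c A B b d \<rho> (xk k0) (yk k0)
                - (Lhat Q c A B b d \<rho> (xk (k0 - 1)) (yk k0)
                   + gradx Q c A B \<rho> (xk (k0 - 1)) (yk k0) \<bullet> (xk k0 - xk (k0 - 1)))
        in ry \<in> subdiff (\<lambda>y. ereal (- Lhat Q c A B b d \<rho> (xk k0) y) + ind Yset y) (yk k0)
         \<and> rx \<in> eps_subdiff (\<lambda>x. ereal (Lhat Q c A B b d \<rho> x (yk k0)) + ind unitbox x) \<epsilon> (xk k0)
         \<and> norm ry \<le> sqrt (3 * \<Delta>0) / sqrt (\<tau>2 * real N)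
         \<and> norm rx \<le> 2 * sqrt \<Delta>0 / sqrt (\<tau>1 * real N)
         \<and> \<epsilon> \<le> \<Delta>0 / (2 * real N)))"
proof -
  interpret run: linearized_pdhg_saddle unitbox Yset "Lhat Q c A B b d \<rho>" "gradx Q c A B \<rho>"
    "Kop A B" "(b, d)" "2 * (onorm (\<lambda>x. Q *v x) + \<rho>)" \<tau>1 \<tau>2 xk yk xs ys
    using linearized_pdhg_Lhat[OF symQ rho tau1 tau2 x0 conv[of 1] step1 step2] saddle
    unfolding xk_def yk_def
    by (intro linearized_pdhg_saddle.intro linearized_pdhg_saddle_axioms.intro) auto
  have "xk 0 = x0" "yk 0 = y0"
    by (simp_all add: xk_def yk_def)
  moreover have "yup k = run.yup k" for k
    using \<open>yk 0 = y0\<close> linear_0[OF run.linear_K]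
    by (cases k) (simp_all add: yup_def run.yup_def scaleR_2)
  ultimately show ?thesis
    using run.residual_rate
    by (simp add: Let_def run.rx_def run.ry_def run.eps_def)
qed

end
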